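(* Let $V=(\mathbb F_2)^n$ and $\gamma\in\mathrm{Sym}(V)$ with $0\gamma=0$. Then: (i) If $\gamma$ maps $\mathcal L(W)$ onto $\mathcal L(W')$, then for every $u\in W$, $\hat\gamma_u(V)\subseteq W'$. (ii) If $\gamma$ maps $\mathcal L(W)$ onto $\mathcal{LA}_U(W_1|W_2)$, then for every $u\in W$: $\hat\gamma_u(S)\subseteq W_1$ where $S=U\gamma^{-1}$, and $\hat\gamma_u(S')\subseteq W_2$ where $S'=(U+\bar v)\gamma^{-1}$ for an arbitrary $\bar v\in V\setminus U$. (iii) If $\gamma$ maps $\mathcal{LA}_U(W_1|W_2)$ onto $\mathcal L(W)$, then for every $u\in W_1$, $\hat\gamma_u(U)\subseteq W$; and for every $u\in W_2$, $\hat\gamma_u(U+\bar v)\subseteq W$ for an arbitrary $\bar v\in V\setminus U$. (iv) If $\gamma$ maps $\mathcal{LA}_U(W_1|W_2)$ onto $\mathcal{LA}_{U'}(W_1'|W_2')$, then, with $\bar v\in V\setminus U$ and $\bar v'\in V\setminus U'$ arbitrary: for every $u\in W_1$, $\hat\gamma_u(S)\subseteq W_1'$ where $S=U\cap (U'\gamma^{-1})$; for every $u\in W_2$, $\hat\gamma_u(S')\subseteq W_1'$ where $S'=(U+\bar v)\cap (U'\gamma^{-1})$; for every $u\in W_1$, $\hat\gamma_u(S)\subseteq W_2'$ where $S=U\cap ((U'+\bar v')\gamma^{-1})$; for every $u\in W_2$, $\hat\gamma_u(S')\subseteq W_2'$ where $S'=(U+\bar v)\cap((U'+\bar v')\ga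mma^{-1})$.
   Context: Permutations act on the right; for $X\subseteq V$, $X\gamma^{-1}$ is the preimage of $X$ under $\gamma$. The derivative of $\gamma$ in direction $u$ is $\hat\gamma_u(x)=(x+u)\gamma+x\gamma$, and $\hat\gamma_u(S)=\{\hat\gamma_u(s):s\in S\}$. A permutation maps a partition $\mathcal A$ onto $\mathcal B$ if the images of the blocks of $\mathcal A$ are exactly the blocks of $\mathcal B$. For a subspace $W$, $\mathcal L(W)=\{W+v:v\in V\}$. For a subspace $U$ of dimension $n-1$ and subspaces $W_1,W_2\subseteq U$, $\mathcal{LA}_U(W_1|W_2)=\{W_1+v:v\in U\}\cup\{(W_2+\bar v)+v:v\in U\}$ for any $\bar v\in V\setminus U$ (independent of the choice). *)

theory Defs
  imports "HOL-Analysis.Analysis" "HOL-Library.Z2"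
begin

text \<open>V = (F_2)^n is modelled as the type bit ^ 'n; subspaces are F_2-subspaces
  (vec.subspace for scalar multiplication (*s)).\<close>

type_synonym 'n V2 = "bit ^ 'n"

text \<open>Right action: x gamma = gamma x. Derivative of gamma in direction u.\<close>
definition deriv2 :: "(('n::finite) V2 \<Rightarrow> 'n V2) \<Rightarrow> 'n V2 \<Rightarrow> 'n V2 \<Rightarrow> 'n V2" where
  "deriv2 \<gamma> u x = \<gamma> (x + u) + \<gamma> x"

definition coset2 :: "('n::finite) V2 set \<Rightarrow> 'n V2 \<Rightarrow> 'n V2 set" where
  "coset2 W v = (\<lambda>w. w + v) ` W"

definition maps_onto :: "(('n::finite) V2 \<Rightarrow> 'n V2) \<Rightarrow> 'n V2 set set \<Rightarrow> 'n V2 set set \<Rightarrow> bool" where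
  "maps_onto \<gamma> A B \<longleftrightarrow> (\<lambda>X. \<gamma> ` X) ` A = B"

definition LL :: "('n::finite) V2 set \<Rightarrow> 'n V2 set set" where
  "LL W = {coset2 W v | v. True}"

text \<open>LA_U(W1|W2), using a chosen vbar outside U (the paper notes independence of the choice).\<close>
definition LA :: "('n::finite) V2 set \<Rightarrow> 'n V2 set \<Rightarrow> 'n V2 set \<Rightarrow> 'n V2 set set" where
  "LA U W1 W2 = (let vb = (SOME vb. vb \<notin> U) in
     {coset2 W1 v | v. v \<in> U} \<union> {coset2 (coset2 W2 vb) v | v. v \<in> U})"

definition hyperplane2 :: "('n::finite) V2 set \<Rightarrow> bool" where
  "hyperplane2 U \<longleftrightarrow> vec.subspace U \<and> vec.dim U = CARD('n) - 1"

end

theory Submission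
  imports Defs
begin

text \<open>Two points x, y lie in a common block of L(W) iff x + y \<in> W, and in a common block
  of LA_U(W1|W2) iff x + y lies in W1 or in W2 according as x \<in> U or x \<notin> U. A permutation
  mapping one partition onto another preserves lying in a common block; applied to x and x + u,
  whose images sum to the derivative of \<gamma> in direction u at x, this gives all four parts.\<close>

lemma add_self_V2 [simp]: "(x::'n::finite V2) + x = 0"
  by (simp add: vec_eq_iff)

lemma add_cancel_V2 [simp]: "(x::'n::finite V2) + (x + y) = y" "x + y + y = x"
  by (metis add.assoc add_self_V2 add_0) (metis add.assoc add_self_V2 add.right_neutral)

lemma diff_eq_add_V2 [simp]: "(x::'n::finite V2) - y = x + y"
  by (simp add: diff_eq_eq)

lemma mem_coset2_iff: "p \<in> coset2 W v \<longleftrightarrow> p + v \<in> W"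
proof
  show "p \<in> coset2 W v \<Longrightarrow> p + v \<in> W" by (auto simp: coset2_def)
  show "p + v \<in> W \<Longrightarrow> p \<in> coset2 W v"
    unfolding coset2_def by (rule image_eqI[of _ _ "p + v"]) simp_all
qed

lemma coset2_coset2: "coset2 (coset2 W a) b = coset2 W (a + b)"
  by (simp add: set_eq_iff mem_coset2_iff add_ac)

lemma hyperplane2_subspace: "hyperplane2 U \<Longrightarrow> vec.subspace U"
  by (simp add: hyperplane2_def)

lemma not_in_coset2_of_subspace:
  assumes "vec.subspace U" "v \<notin> U" "p \<in> coset2 U v"
  shows "p \<notin> U"
  using assms vec.subspace_add[of U p "p + v"] by (auto simp: mem_coset2_iff)

lemma vec_dim_eq_CARD_iff:
  "vec.dim (S :: ('a::field ^ 'n) set) = CARD('n) \<longleftrightarrow> vec.span S = UNIV"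
  using vec.dim_eq_full[of S] by (simp add: vec.dimension_def card_cart_basis)

lemma hyperplane2_ne_UNIV:
  assumes "hyperplane2 (U::'n::finite V2 set)"
  shows "\<exists>v. v \<notin> U"
proof (rule ccontr)
  assume "\<nexists>v. v \<notin> U"
  then have "U = UNIV" by blast
  then have "vec.dim U = CARD('n)" by (simp add: vec_dim_card card_cart_basis)
  moreover have "CARD('n) > 0" by simp
  ultimately show False using assms unfolding hyperplane2_def by linarith
qed

lemma hyperplane2_add_notin:
  assumes h: "hyperplane2 (U::'n::finite V2 set)" and a: "a \<notin> U" and b: "b \<notin> U"
  shows "a + b \<in> U"
proof -
  have U: "vec.subspace U" and dim_U: "vec.dim U = CARD('n) - 1"
    using h by (auto simp: hyperplane2_def)
  have span_U: "vec.span U = U" using U by (simp add: vec.span_eq_iff)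
  have "vec.dim (insert a U) = CARD('n)"
    using dim_U vec.dim_insert[of a U] a by (simp add: span_U)
  then have "vec.span (insert a U) = UNIV" by (simp add: vec_dim_eq_CARD_iff)
  then obtain k where "b - k *s a \<in> U"
    using vec.span_breakdown_eq[of b a U] by (auto simp: span_U)
  moreover have "k = 0 \<or> k = 1" by (cases k) auto
  ultimately show ?thesis using b by (auto simp: add.commute)
qed

definition same_block :: "'a set set \<Rightarrow> 'a \<Rightarrow> 'a \<Rightarrow> bool" where
  "same_block A x y \<longleftrightarrow> (\<exists>X\<in>A. x \<in> X \<and> y \<in> X)"

lemma same_block_image:
  "maps_onto \<gamma> A B \<Longrightarrow> same_block A x y \<Longrightarrow> same_block B (\<gamma> x) (\<gamma> y)"
  unfolding maps_onto_def same_block_def by blast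

lemma same_coset2_iff:
  assumes "vec.subspace W"
  shows "(\<exists>v\<in>P. x \<in> coset2 W v \<and> y \<in> coset2 W v) \<longleftrightarrow>
    x + y \<in> W \<and> (\<exists>v\<in>P. x + v \<in> W)"
proof -
  have "x + y \<in> W" if "x + v \<in> W" "y + v \<in> W" for v
    using vec.subspace_add[OF assms that] by (simp add: add_ac)
  moreover have "y + v \<in> W" if "x + y \<in> W" "x + v \<in> W" for v
    using vec.subspace_add[OF assms that] by (simp add: add_ac)
  ultimately show ?thesis by (auto simp: mem_coset2_iff)
qed

lemma same_block_LL_iff:
  assumes "vec.subspace W"
  shows "same_block (LL W) x y \<longleftrightarrow> x + y \<in> W"
proof -
  have "same_block (LL W) x y \<longleftrightarrow> (\<exists>v\<in>UNIV. x \<in> coset2 W v \<and> y \<in> coset2 W v)"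
    by (auto simp: same_block_def LL_def)
  also have "\<dots> \<longleftrightarrow> x + y \<in> W"
    using vec.subspace_0[OF assms] by (auto simp: same_coset2_iff[OF assms] intro: bexI[of _ x])
  finally show ?thesis .
qed

lemma LA_eq:
  assumes "hyperplane2 U"
  shows "LA U W1 W2 = {coset2 W1 v | v. v \<in> U} \<union> {coset2 W2 v | v. v \<notin> U}"
proof -
  define v0 where "v0 = (SOME v. v \<notin> U)"
  have v0: "v0 \<notin> U"
    unfolding v0_def using hyperplane2_ne_UNIV[OF assms] by (rule someI_ex)
  have U: "vec.subspace U" using assms by (rule hyperplane2_subspace)
  have shift: "(+) v0 ` U = - U"
  proof
    show "(+) v0 ` U \<subseteq> - U"
      using vec.subspace_add[OF U, of "v0 + v" v for v] v0 by auto
    show "- U \<subseteq> (+) v0 ` U"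
    proof
      fix v assume "v \<in> - U"
      then have "v0 + v \<in> U" using hyperplane2_add_notin[OF assms v0] by simp
      then show "v \<in> (+) v0 ` U" by (rule rev_image_eqI) simp
    qed
  qed
  have "{coset2 (coset2 W2 v0) v | v. v \<in> U} = coset2 W2 ` ((+) v0 ` U)"
    by (auto simp: coset2_coset2)
  also have "\<dots> = {coset2 W2 v | v. v \<notin> U}"
    unfolding shift by auto
  finally show ?thesis
    by (simp add: LA_def v0_def[symmetric])
qed

lemma same_block_LA_iff:
  assumes "hyperplane2 U" "vec.subspace W1" "vec.subspace W2" "W1 \<subseteq> U" "W2 \<subseteq> U"
  shows "same_block (LA U W1 W2) x y \<longleftrightarrow> x + y \<in> (if x \<in> U then W1 else W2)"
proof -
  have U: "vec.subspace U" using assms(1) by (rule hyperplane2_subspace)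
  have "same_block (LA U W1 W2) x y \<longleftrightarrow>
      (\<exists>v\<in>U. x \<in> coset2 W1 v \<and> y \<in> coset2 W1 v) \<or>
      (\<exists>v\<in>-U. x \<in> coset2 W2 v \<and> y \<in> coset2 W2 v)"
    by (auto simp: same_block_def LA_eq[OF assms(1)])
  also have "\<dots> \<longleftrightarrow>
      x + y \<in> W1 \<and> (\<exists>v\<in>U. x + v \<in> W1) \<or> x + y \<in> W2 \<and> (\<exists>v\<in>-U. x + v \<in> W2)"
    by (simp add: same_coset2_iff assms(2,3))
  also have "(\<exists>v\<in>U. x + v \<in> W1) \<longleftrightarrow> x \<in> U"
  proof
    assume "\<exists>v\<in>U. x + v \<in> W1"
    then obtain v where "v \<in> U" "x + v \<in> U" using assms(4) by blast
    then show "x \<in> U" using vec.subspace_add[OF U, of "x + v" v] by simp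
  qed (use vec.subspace_0[OF assms(2)] in \<open>auto intro: bexI[of _ x]\<close>)
  also have "(\<exists>v\<in>-U. x + v \<in> W2) \<longleftrightarrow> x \<notin> U"
  proof
    assume "\<exists>v\<in>-U. x + v \<in> W2"
    then obtain v where "v \<notin> U" "x + v \<in> U" using assms(5) by blast
    then show "x \<notin> U" using vec.subspace_add[OF U, of x "x + v"] by auto
  qed (use vec.subspace_0[OF assms(3)] in \<open>auto intro: bexI[of _ x]\<close>)
  finally show ?thesis by auto
qed

text \<open>S x and T x are the direction spaces of the blocks through x of the two partitions.\<close>

lemma deriv2_mem_of_maps_onto:
  assumes "maps_onto \<gamma> A B"
    and "\<And>x y. same_block A x y \<longleftrightarrow> x + y \<in> S x"
    and "\<And>x y. same_block B x y \<longleftrightarrow> x + y \<in> T x"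
    and "u \<in> S x"
  shows "deriv2 \<gamma> u x \<in> T (\<gamma> x)"
proof -
  have "same_block A x (x + u)" using assms(2,4) by simp
  then have "same_block B (\<gamma> x) (\<gamma> (x + u))" by (rule same_block_image[OF assms(1)])
  then show ?thesis using assms(3) by (simp add: deriv2_def add.commute)
qed

lemma deriv2_image_LL_LL:
  assumes "vec.subspace W" "vec.subspace W'" "maps_onto \<gamma> (LL W) (LL W')" "u \<in> W"
  shows "deriv2 \<gamma> u ` UNIV \<subseteq> W'"
  using deriv2_mem_of_maps_onto[OF assms(3) same_block_LL_iff[OF assms(1)]
      same_block_LL_iff[OF assms(2)] assms(4)]
  by (simp add: image_subset_iff)

lemma deriv2_image_LL_LA:
  assumes W: "vec.subspace W"
    and LA: "hyperplane2 U" "vec.subspace W1" "vec.subspace W2" "W1 \<subseteq> U" "W2 \<subseteq> U"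
    and \<gamma>: "maps_onto \<gamma> (LL W) (LA U W1 W2)" and u: "u \<in> W" and vb: "vb \<notin> U"
  shows "deriv2 \<gamma> u ` (\<gamma> -` U) \<subseteq> W1"
    and "deriv2 \<gamma> u ` (\<gamma> -` coset2 U vb) \<subseteq> W2"
proof -
  have mem: "deriv2 \<gamma> u x \<in> (if \<gamma> x \<in> U then W1 else W2)" for x
    by (rule deriv2_mem_of_maps_onto[OF \<gamma> same_block_LL_iff[OF W] same_block_LA_iff[OF LA] u])
  note coset = not_in_coset2_of_subspace[OF hyperplane2_subspace[OF LA(1)] vb]
  show "deriv2 \<gamma> u ` (\<gamma> -` U) \<subseteq> W1"
    using mem by (fastforce simp: image_subset_iff split: if_splits)
  show "deriv2 \<gamma> u ` (\<gamma> -` coset2 U vb) \<subseteq> W2"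
    using mem coset by (fastforce simp: image_subset_iff split: if_splits)
qed

lemma deriv2_image_LA_LL:
  assumes W: "vec.subspace W"
    and LA: "hyperplane2 U" "vec.subspace W1" "vec.subspace W2" "W1 \<subseteq> U" "W2 \<subseteq> U"
    and \<gamma>: "maps_onto \<gamma> (LA U W1 W2) (LL W)" and vb: "vb \<notin> U"
  shows "u \<in> W1 \<Longrightarrow> deriv2 \<gamma> u ` U \<subseteq> W"
    and "u \<in> W2 \<Longrightarrow> deriv2 \<gamma> u ` coset2 U vb \<subseteq> W"
proof -
  have mem: "deriv2 \<gamma> u x \<in> W" if "u \<in> (if x \<in> U then W1 else W2)" for u x
    by (rule deriv2_mem_of_maps_onto[OF \<gamma> same_block_LA_iff[OF LA] same_block_LL_iff[OF W] that])
  note coset = not_in_coset2_of_subspace[OF hyperplane2_subspace[OF LA(1)] vb]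
  show "deriv2 \<gamma> u ` U \<subseteq> W" if "u \<in> W1"
    using mem that by (fastforce simp: image_subset_iff split: if_splits)
  show "deriv2 \<gamma> u ` coset2 U vb \<subseteq> W" if "u \<in> W2"
    using mem coset that by (fastforce simp: image_subset_iff split: if_splits)
qed

lemma deriv2_image_LA_LA:
  assumes LA: "hyperplane2 U" "vec.subspace W1" "vec.subspace W2" "W1 \<subseteq> U" "W2 \<subseteq> U"
    and LA': "hyperplane2 U'" "vec.subspace W1'" "vec.subspace W2'" "W1' \<subseteq> U'" "W2' \<subseteq> U'"
    and \<gamma>: "maps_onto \<gamma> (LA U W1 W2) (LA U' W1' W2')" and vb: "vb \<notin> U" "vb' \<notin> U'"
  shows "u \<in> W1 \<Longrightarrow> deriv2 \<gamma> u ` (U \<inter> \<gamma> -` U') \<subseteq> W1'"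
    and "u \<in> W2 \<Longrightarrow> deriv2 \<gamma> u ` (coset2 U vb \<inter> \<gamma> -` U') \<subseteq> W1'"
    and "u \<in> W1 \<Longrightarrow> deriv2 \<gamma> u ` (U \<inter> \<gamma> -` coset2 U' vb') \<subseteq> W2'"
    and "u \<in> W2 \<Longrightarrow> deriv2 \<gamma> u ` (coset2 U vb \<inter> \<gamma> -` coset2 U' vb') \<subseteq> W2'"
proof -
  have mem: "deriv2 \<gamma> u x \<in> (if \<gamma> x \<in> U' then W1' else W2')"
    if "u \<in> (if x \<in> U then W1 else W2)" for u x
    by (rule deriv2_mem_of_maps_onto[OF \<gamma> same_block_LA_iff[OF LA] same_block_LA_iff[OF LA'] that])
  note coset = not_in_coset2_of_subspace[OF hyperplane2_subspace[OF LA(1)] vb(1)]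
  note coset' = not_in_coset2_of_subspace[OF hyperplane2_subspace[OF LA'(1)] vb(2)]
  show "deriv2 \<gamma> u ` (U \<inter> \<gamma> -` U') \<subseteq> W1'" if "u \<in> W1"
    using mem that by (fastforce simp: image_subset_iff split: if_splits)
  show "deriv2 \<gamma> u ` (coset2 U vb \<inter> \<gamma> -` U') \<subseteq> W1'" if "u \<in> W2"
    using mem coset that by (fastforce simp: image_subset_iff split: if_splits)
  show "deriv2 \<gamma> u ` (U \<inter> \<gamma> -` coset2 U' vb') \<subseteq> W2'" if "u \<in> W1"
    using mem coset' that by (fastforce simp: image_subset_iff split: if_splits)
  show "deriv2 \<gamma> u ` (coset2 U vb \<inter> \<gamma> -` coset2 U' vb') \<subseteq> W2'" if "u \<in> W2"
    using mem coset coset' that by (fastforce simp: image_subset_iff split: if_splits)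
qed

theorem lemma3p7:
  fixes \<gamma> :: "('n::finite) V2 \<Rightarrow> 'n V2"
  assumes bij: "bij \<gamma>" and zero: "\<gamma> 0 = 0"
  shows
  "(\<forall>W W'. vec.subspace W \<and> vec.subspace W' \<and> maps_onto \<gamma> (LL W) (LL W') \<longrightarrow>
      (\<forall>u\<in>W. deriv2 \<gamma> u ` UNIV \<subseteq> W'))
   \<and>
   (\<forall>W U W1 W2 vb. vec.subspace W \<and> hyperplane2 U \<and> vec.subspace W1 \<and> vec.subspace W2 \<and>
      W1 \<subseteq> U \<and> W2 \<subseteq> U \<and> vb \<notin> U \<and> maps_onto \<gamma> (LL W) (LA U W1 W2) \<longrightarrow>
      (\<forall>u\<in>W. deriv2 \<gamma> u ` (\<gamma> -` U) \<subseteq> W1 \<and>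
               deriv2 \<gamma> u ` (\<gamma> -` coset2 U vb) \<subseteq> W2))
   \<and>
   (\<forall>W U W1 W2 vb. vec.subspace W \<and> hyperplane2 U \<and> vec.subspace W1 \<and> vec.subspace W2 \<and>
      W1 \<subseteq> U \<and> W2 \<subseteq> U \<and> vb \<notin> U \<and> maps_onto \<gamma> (LA U W1 W2) (LL W) \<longrightarrow>
      (\<forall>u\<in>W1. deriv2 \<gamma> u ` U \<subseteq> W) \<and>
      (\<forall>u\<in>W2. deriv2 \<gamma> u ` coset2 U vb \<subseteq> W))
   \<and>
   (\<forall>U W1 W2 U' W1' W2' vb vb'. hyperplane2 U \<and> vec.subspace W1 \<and> vec.subspace W2 \<and>
      W1 \<subseteq> U \<and> W2 \<subseteq> U \<and> hyperplane2 U' \<and> vec.subspace W1' \<and> vec.subspace W2' \<and>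
      W1' \<subseteq> U' \<and> W2' \<subseteq> U' \<and> vb \<notin> U \<and> vb' \<notin> U' \<and>
      maps_onto \<gamma> (LA U W1 W2) (LA U' W1' W2') \<longrightarrow>
      (\<forall>u\<in>W1. deriv2 \<gamma> u ` (U \<inter> \<gamma> -` U') \<subseteq> W1') \<and>
      (\<forall>u\<in>W2. deriv2 \<gamma> u ` (coset2 U vb \<inter> \<gamma> -` U') \<subseteq> W1') \<and>
      (\<forall>u\<in>W1. deriv2 \<gamma> u ` (U \<inter> \<gamma> -` coset2 U' vb') \<subseteq> W2') \<and>
      (\<forall>u\<in>W2. deriv2 \<gamma> u ` (coset2 U vb \<inter> \<gamma> -` coset2 U' vb') \<subseteq> W2'))"
  by (intro conjI allI impI ballI; elim conjE)
    (simp_all add: deriv2_image_LL_LL deriv2_image_LL_LA deriv2_image_LA_LL deriv2_image_LA_LA)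

end
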